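(* For a $d$-regular simple graph on $n$ vertices quantised with equi-transmitting scattering matrices, for every $f\in G_1$ and every integer $t\ge0$, $$\psi\big(\hat C^t\tilde\varphi(f)\big)=M^tf.$$
   Context: For directed bond $b$, $o(b),t(b)$ are origin and terminus, $\bar b$ its reversal. For equi-transmitting quantisation, $M$ is the $2B\times2B$ matrix with $M_{bc}=\frac1{d-1}$ if $t(b)=o(c)$ and $c\ne\bar b$, and $0$ otherwise. $e_v\in\mathbb{C}^{2B}$ has component $1$ on each directed bond with origin $v$, $0$ elsewhere; $\tilde e_v$ has component $1$ on each directed bond with terminus $v$, $0$ elsewhere. $G_1=\mathrm{span}\{e_1,\dots,e_n\}$. $\tilde\varphi:G_1\to\mathbb{C}^{2n}$ maps $\sum_va_ve_v$ to $(a_1,\dots,a_n,0,\dots,0)^T$. $\psi:\mathbb{C}^{2n}\to\mathbb{C}^{2B}$ is $\psi(\mathbf a,\mathbf b)=\sum_va_ve_v+\sum_vb_v\tilde e_v$. $C$ is the $n\times n$ connectivity (adjacency) matrix and $\hat C=\begin{pmatrix}0&-\frac1{d-1}I_n\\ I_n&\frac1{d-1}C\end{pmatrix}$. *)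

theory Defs
  imports Complex_Main
begin

text \<open>Matrices are represented by their entry functions, acting on vectors
  (functions) indexed by a finite index set I.\<close>

definition mmult :: "'i set \<Rightarrow> ('i \<Rightarrow> 'i \<Rightarrow> complex) \<Rightarrow> ('i \<Rightarrow> 'i \<Rightarrow> complex) \<Rightarrow> ('i \<Rightarrow> 'i \<Rightarrow> complex)" where
  "mmult I A B = (\<lambda>i j. \<Sum>k\<in>I. A i k * B k j)"

fun mpow :: "'i set \<Rightarrow> ('i \<Rightarrow> 'i \<Rightarrow> complex) \<Rightarrow> nat \<Rightarrow> ('i \<Rightarrow> 'i \<Rightarrow> complex)" where
  "mpow I A 0 = (\<lambda>i j. if i = j then 1 else 0)"
| "mpow I A (Suc t) = mmult I (mpow I A t) A"

definition mvec :: "'i set \<Rightarrow> ('i \<Rightarrow> 'i \<Rightarrow> complex) \<Rightarrow> ('i \<Rightarrow> complex) \<Rightarrow> ('i \<Rightarrow> complex)" where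
  "mvec I A x = (\<lambda>i. \<Sum>j\<in>I. A i j * x j)"

definition simple_graph :: "nat \<Rightarrow> (nat \<Rightarrow> nat \<Rightarrow> bool) \<Rightarrow> bool" where
  "simple_graph n E \<longleftrightarrow> (\<forall>u v. E u v \<longrightarrow> u \<in> {1..n} \<and> v \<in> {1..n}) \<and>
     (\<forall>u v. E u v \<longrightarrow> E v u) \<and> (\<forall>v. \<not> E v v)"

definition regular :: "nat \<Rightarrow> (nat \<Rightarrow> nat \<Rightarrow> bool) \<Rightarrow> nat \<Rightarrow> bool" where
  "regular n E d \<longleftrightarrow> (\<forall>v\<in>{1..n}. card {u. E v u} = d)"

definition dbonds :: "(nat \<Rightarrow> nat \<Rightarrow> bool) \<Rightarrow> (nat \<times> nat) set" where
  "dbonds E = {(u, v). E u v}"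

definition orig :: "nat \<times> nat \<Rightarrow> nat" where "orig b = fst b"
definition termin :: "nat \<times> nat \<Rightarrow> nat" where "termin b = snd b"
definition rev_bond :: "nat \<times> nat \<Rightarrow> nat \<times> nat" where "rev_bond b = (snd b, fst b)"

definition Mmat :: "nat \<Rightarrow> nat \<times> nat \<Rightarrow> nat \<times> nat \<Rightarrow> complex" where
  "Mmat d b c = (if termin b = orig c \<and> c \<noteq> rev_bond b then 1 / (of_nat d - 1) else 0)"

definition e_out :: "nat \<Rightarrow> nat \<times> nat \<Rightarrow> complex" where
  "e_out v b = (if orig b = v then 1 else 0)"

definition e_in :: "nat \<Rightarrow> nat \<times> nat \<Rightarrow> complex" where
  "e_in v b = (if termin b = v then 1 else 0)"

text \<open>Connectivity matrix C on {1..n} and the 2n x 2n matrix C-hat on indices {1..2n}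
  (indices 1..n: first block, n+1..2n: second block).\<close>

definition Cmat :: "(nat \<Rightarrow> nat \<Rightarrow> bool) \<Rightarrow> nat \<Rightarrow> nat \<Rightarrow> complex" where
  "Cmat E u v = (if E u v then 1 else 0)"

definition Chat :: "nat \<Rightarrow> (nat \<Rightarrow> nat \<Rightarrow> bool) \<Rightarrow> nat \<Rightarrow> nat \<Rightarrow> nat \<Rightarrow> complex" where
  "Chat n E d i j =
     (if i \<le> n then (if j \<le> n then 0 else (if j - n = i then - 1 / (of_nat d - 1) else 0))
      else (if j \<le> n then (if i - n = j then 1 else 0)
            else Cmat E (i - n) (j - n) / (of_nat d - 1)))"

text \<open>Elements of G_1 written as sum_v a_v e_v; the map phi-tilde and psi.\<close>

definition G1_elem :: "nat \<Rightarrow> (nat \<Rightarrow> complex) \<Rightarrow> nat \<times> nat \<Rightarrow> complex" where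
  "G1_elem n a = (\<lambda>b. \<Sum>v\<in>{1..n}. a v * e_out v b)"

definition phi_tilde :: "nat \<Rightarrow> (nat \<Rightarrow> complex) \<Rightarrow> nat \<Rightarrow> complex" where
  "phi_tilde n a = (\<lambda>i. if i \<in> {1..n} then a i else 0)"

definition psi :: "nat \<Rightarrow> (nat \<Rightarrow> complex) \<Rightarrow> nat \<times> nat \<Rightarrow> complex" where
  "psi n x = (\<lambda>b. (\<Sum>v\<in>{1..n}. x v * e_out v b) + (\<Sum>v\<in>{1..n}. x (n + v) * e_in v b))"

end

theory Submission
  imports Defs
begin

text \<open>The map psi intertwines C-hat with M: psi (C-hat x) = M (psi x) for every x.
  On a bond (u,w) the left side is -x(n+u)/(d-1) + x(w) + (sum over v ~ w of x(n+v))/(d-1);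
  the first term cancels the summand v = u, and since w has exactly d - 1 neighbours other
  than u, x(w) is the average of d - 1 copies of itself, leaving
  (sum over v ~ w, v \<noteq> u of x(w) + x(n+v))/(d-1), which is (M (psi x))(u,w).
  Iterating this relation and using psi (phi_tilde f) = f gives the claim.\<close>

lemma mvec_mpow_Suc:
  assumes "finite I"
  shows "mvec I (mpow I A (Suc t)) x = mvec I (mpow I A t) (mvec I A x)"
  using assms
  by (simp add: mvec_def mmult_def sum_distrib_left sum_distrib_right mult.assoc fun_eq_iff;
      subst sum.swap; simp)

lemma mvec_mpow_0:
  assumes "finite I" "i \<in> I"
  shows "mvec I (mpow I A 0) x i = x i"
proof -
  have "mvec I (mpow I A 0) x i = (\<Sum>j\<in>I. if i = j then x j else 0)"
    unfolding mvec_def by (intro sum.cong) auto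
  then show ?thesis using assms by simp
qed

lemma mvec_cong: "(\<And>j. j \<in> I \<Longrightarrow> x j = y j) \<Longrightarrow> mvec I A x i = mvec I A y i"
  unfolding mvec_def by (rule sum.cong) auto

lemma mvec_mpow_intertwine:
  assumes "finite I" "finite J"
    and local: "\<And>x y j. j \<in> J \<Longrightarrow> (\<And>i. i \<in> I \<Longrightarrow> x i = y i) \<Longrightarrow> P x j = P y j"
    and intertwine: "\<And>x j. j \<in> J \<Longrightarrow> P (mvec I A x) j = mvec J B (P x) j"
    and "j \<in> J"
  shows "P (mvec I (mpow I A t) x) j = mvec J (mpow J B t) (P x) j"
  using \<open>j \<in> J\<close>
proof (induction t arbitrary: x j)
  case 0
  have "P (mvec I (mpow I A 0) x) j = P x j"
    using 0 by (intro local) (simp_all add: mvec_mpow_0 \<open>finite I\<close> del: mpow.simps)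
  also have "\<dots> = mvec J (mpow J B 0) (P x) j"
    using 0 by (simp add: mvec_mpow_0 \<open>finite J\<close> del: mpow.simps)
  finally show ?case .
next
  case (Suc t)
  have "P (mvec I (mpow I A (Suc t)) x) j = P (mvec I (mpow I A t) (mvec I A x)) j"
    by (simp only: mvec_mpow_Suc[OF \<open>finite I\<close>])
  also have "\<dots> = mvec J (mpow J B t) (P (mvec I A x)) j"
    using Suc by blast
  also have "\<dots> = mvec J (mpow J B t) (mvec J B (P x)) j"
    by (intro mvec_cong intertwine)
  also have "\<dots> = mvec J (mpow J B (Suc t)) (P x) j"
    by (simp only: mvec_mpow_Suc[OF \<open>finite J\<close>])
  finally show ?case .
qed

lemma dbonds_subset:
  assumes "simple_graph n E"
  shows "dbonds E \<subseteq> {1..n} \<times> {1..n}"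
  using assms by (auto simp: simple_graph_def dbonds_def)

lemma finite_dbonds:
  assumes "simple_graph n E"
  shows "finite (dbonds E)"
  using dbonds_subset[OF assms] by (rule finite_subset) auto

lemma neighbours_subset:
  assumes "simple_graph n E"
  shows "{v. E w v} \<subseteq> {1..n}"
  using assms by (auto simp: simple_graph_def)

lemma psi_bond:
  assumes "simple_graph n E" "(u, w) \<in> dbonds E"
  shows "psi n y (u, w) = y u + y (n + w)"
proof -
  have "u \<in> {1..n}" "w \<in> {1..n}" using dbonds_subset[OF assms(1)] assms(2) by auto
  then show ?thesis
    by (simp add: psi_def e_out_def e_in_def orig_def termin_def if_distrib cong: if_cong)
qed

lemma psi_phi_tilde: "psi n (phi_tilde n a) = G1_elem n a"
  by (simp add: psi_def G1_elem_def phi_tilde_def fun_eq_iff)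

lemma mvec_Chat_upper:
  assumes "i \<in> {1..n}"
  shows "mvec {1..2*n} (Chat n E d) x i = - x (n + i) / (of_nat d - 1)"
proof -
  have "mvec {1..2*n} (Chat n E d) x i
      = (\<Sum>j\<in>{1..2*n}. if j = n + i then - x j / (of_nat d - 1) else 0)"
    unfolding mvec_def using assms by (intro sum.cong) (auto simp: Chat_def)
  then show ?thesis using assms by (simp add: sum.delta')
qed

lemma mvec_Chat_lower:
  assumes "simple_graph n E" "w \<in> {1..n}"
  shows "mvec {1..2*n} (Chat n E d) x (n + w)
     = x w + (\<Sum>v\<in>{v. E w v}. x (n + v)) / (of_nat d - 1)"
proof -
  let ?c = "Chat n E d (n + w)"
  have split: "{1..2*n} = {1..n} \<union> (\<lambda>v. n + v) ` {1..n}"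
    by (auto simp: image_iff)
  have "mvec {1..2*n} (Chat n E d) x (n + w)
      = (\<Sum>j\<in>{1..n}. ?c j * x j) + (\<Sum>j\<in>(\<lambda>v. n + v) ` {1..n}. ?c j * x j)"
    unfolding mvec_def split by (rule sum.union_disjoint) auto
  also have "(\<Sum>j\<in>{1..n}. ?c j * x j) = (\<Sum>j\<in>{1..n}. if j = w then x j else 0)"
    using assms(2) by (intro sum.cong) (auto simp: Chat_def)
  also have "\<dots> = x w" using assms(2) by (simp add: sum.delta')
  also have "(\<Sum>j\<in>(\<lambda>v. n + v) ` {1..n}. ?c j * x j) = (\<Sum>v\<in>{1..n}. ?c (n + v) * x (n + v))"
    by (subst sum.reindex) (auto simp: inj_on_def)
  also have "\<dots> = (\<Sum>v\<in>{1..n}. if E w v then x (n + v) / (of_nat d - 1) else 0)"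
    using assms(2) by (intro sum.cong) (auto simp: Chat_def Cmat_def)
  also have "\<dots> = (\<Sum>v\<in>{v. E w v}. x (n + v) / (of_nat d - 1))"
    using neighbours_subset[OF assms(1)] by (simp add: sum.If_cases Int_absorb1)
  finally show ?thesis by (simp add: sum_divide_distrib)
qed

lemma mvec_Mmat_bond:
  assumes "simple_graph n E"
  shows "mvec (dbonds E) (Mmat d) z (u, w)
     = (\<Sum>v\<in>{v. E w v} - {u}. z (w, v)) / (of_nat d - 1)"
proof -
  have "mvec (dbonds E) (Mmat d) z (u, w)
     = (\<Sum>c\<in>dbonds E. if fst c = w \<and> c \<noteq> (w, u) then z c / (of_nat d - 1) else 0)"
    unfolding mvec_def
    by (intro sum.cong) (auto simp: Mmat_def termin_def orig_def rev_bond_def)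
  also have "\<dots> = (\<Sum>c\<in>{c\<in>dbonds E. fst c = w \<and> c \<noteq> (w, u)}. z c / (of_nat d - 1))"
    by (simp add: sum.inter_filter finite_dbonds[OF assms])
  also have "{c\<in>dbonds E. fst c = w \<and> c \<noteq> (w, u)} = Pair w ` ({v. E w v} - {u})"
    by (auto simp: dbonds_def)
  also have "(\<Sum>c\<in>Pair w ` ({v. E w v} - {u}). z c / (of_nat d - 1))
     = (\<Sum>v\<in>{v. E w v} - {u}. z (w, v) / (of_nat d - 1))"
    by (subst sum.reindex) (auto simp: inj_on_def)
  finally show ?thesis by (simp add: sum_divide_distrib)
qed

lemma psi_Chat_eq_Mmat_psi:
  assumes g: "simple_graph n E" and "regular n E d" and "d \<ge> 2" and b: "(u, w) \<in> dbonds E"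
  shows "psi n (mvec {1..2*n} (Chat n E d) x) (u, w) = mvec (dbonds E) (Mmat d) (psi n x) (u, w)"
proof -
  let ?D = "of_nat d - 1 :: complex"
  let ?N = "{v. E w v} - {u}"
  have "u \<in> {1..n}" "w \<in> {1..n}" "E w u"
    using dbonds_subset[OF g] b g by (auto simp: dbonds_def simple_graph_def)
  have fin: "finite {v. E w v}"
    using neighbours_subset[OF g] by (rule finite_subset) simp
  have card: "of_nat (card ?N) = ?D"
    using \<open>regular n E d\<close> \<open>w \<in> {1..n}\<close> \<open>E w u\<close> \<open>d \<ge> 2\<close> fin
    by (simp add: regular_def of_nat_diff)
  have "?D \<noteq> 0"
    using \<open>d \<ge> 2\<close> by (metis of_nat_1 of_nat_eq_iff right_minus_eq Suc_1 not_less_eq_eq order_refl)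
  have neighbours: "(\<Sum>v\<in>{v. E w v}. x (n + v)) = x (n + u) + (\<Sum>v\<in>?N. x (n + v))"
    using fin \<open>E w u\<close> by (simp add: sum.remove)
  have "(\<Sum>v\<in>?N. psi n x (w, v)) = (\<Sum>v\<in>?N. x w + x (n + v))"
    by (intro sum.cong refl) (auto simp: psi_bond[OF g] dbonds_def)
  also have "\<dots> = ?D * x w + (\<Sum>v\<in>?N. x (n + v))"
    by (simp add: sum.distrib card)
  finally have outgoing: "(\<Sum>v\<in>?N. psi n x (w, v)) = ?D * x w + (\<Sum>v\<in>?N. x (n + v))" .
  have "psi n (mvec {1..2*n} (Chat n E d) x) (u, w)
     = - x (n + u) / ?D + (x w + (\<Sum>v\<in>{v. E w v}. x (n + v)) / ?D)"
    by (simp only: psi_bond[OF g b] mvec_Chat_upper[OF \<open>u \<in> {1..n}\<close>]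
        mvec_Chat_lower[OF g \<open>w \<in> {1..n}\<close>])
  also have "\<dots> = (?D * x w + (\<Sum>v\<in>?N. x (n + v))) / ?D"
    using \<open>?D \<noteq> 0\<close> unfolding neighbours add_divide_distrib by simp
  also have "\<dots> = mvec (dbonds E) (Mmat d) (psi n x) (u, w)"
    by (simp add: mvec_Mmat_bond[OF g] outgoing)
  finally show ?thesis .
qed

theorem proposition7:
  fixes n d :: nat and E :: "nat \<Rightarrow> nat \<Rightarrow> bool" and a :: "nat \<Rightarrow> complex" and t :: nat
  assumes "simple_graph n E" and "regular n E d" and "d \<ge> 2"
  shows "\<forall>b\<in>dbonds E.
    psi n (mvec {1..2*n} (mpow {1..2*n} (Chat n E d) t) (phi_tilde n a)) b
      = mvec (dbonds E) (mpow (dbonds E) (Mmat d) t) (G1_elem n a) b"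
proof
  fix b assume b: "b \<in> dbonds E"
  have local: "psi n x c = psi n y c"
    if "c \<in> dbonds E" "\<And>i. i \<in> {1..2*n} \<Longrightarrow> x i = y i" for x y c
    using that dbonds_subset[OF assms(1)]
    by (cases c) (force simp: psi_bond[OF assms(1)])
  have intertwine: "psi n (mvec {1..2*n} (Chat n E d) x) c = mvec (dbonds E) (Mmat d) (psi n x) c"
    if "c \<in> dbonds E" for x c
    using that psi_Chat_eq_Mmat_psi[OF assms] by (cases c) blast
  show "psi n (mvec {1..2*n} (mpow {1..2*n} (Chat n E d) t) (phi_tilde n a)) b
      = mvec (dbonds E) (mpow (dbonds E) (Mmat d) t) (G1_elem n a) b"
    using mvec_mpow_intertwine[where P = "psi n", OF finite_atLeastAtMost finite_dbonds[OF assms(1)] local intertwine b]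
    by (simp only: psi_phi_tilde)
qed

end
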